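(* Let $(K_i)_{i\in I}$ be a family of nonempty compact Hausdorff spaces each having the regular extension property, and let $K$ be the Alexandroff compactification of their topological sum $\bigsqcup_{i\in I}K_i$. Then $K$ has the regular extension property. (That is, the class of compact Hausdorff spaces with the regular extension property is closed under taking Alexandroff compactifications of arbitrary topological sums.)
   Context: The Alexandroff compactification of a locally compact Hausdorff space $X$ is $X$ itself if $X$ is compact, and its one-point compactification $X\cup\{\infty\}$ otherwise. $C(K)$ is the Banach space of real-valued continuous functions on $K$ with the supremum norm and $\mathbf 1_K$ its unit. For a closed $F\subseteq K$, an extension operator for $F$ in $K$ is a bounded linear map $E:C(F)\to C(K)$ with $E(f)|_F=f$ for all $f$; it is regular if $\|E\|\le 1$ and $E(\mathbf 1_F)=\mathbf 1_K$. $K$ has the regular extension property if every nonempty closed subset admits a regular extension operator in $K$. *)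

theory Defs
  imports "HOL-Analysis.Analysis"
begin

text \<open>Alexandroff compactification of a topological space X, realised on the type
  'a option: Some x represents x, None is the point at infinity.\<close>

definition one_point_compactification :: "'a topology \<Rightarrow> 'a option topology" where
  "one_point_compactification X =
     topology (\<lambda>U. U \<subseteq> insert None (Some ` topspace X) \<and> openin X (Some -` U) \<and>
                   (None \<in> U \<longrightarrow> compactin X (topspace X - Some -` U)))"

definition copy_topology :: "'a topology \<Rightarrow> 'a option topology" where
  "copy_topology X = topology (\<lambda>U. U \<subseteq> Some ` topspace X \<and> openin X (Some -` U))"

definition alexandroff_compactification :: "'a topology \<Rightarrow> 'a option topology" where
  "alexandroff_compactification X =
     (if compact_space X then copy_topology X else one_point_compactification X)"

text \<open>C(F) is represented by functions continuous on the subspace F (values off F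
  are irrelevant).\<close>

definition regular_extension_operator ::
  "'a topology \<Rightarrow> 'a set \<Rightarrow> (('a \<Rightarrow> real) \<Rightarrow> ('a \<Rightarrow> real)) \<Rightarrow> bool" where
  "regular_extension_operator K F E \<longleftrightarrow>
     (\<forall>f. continuous_map (subtopology K F) euclideanreal f \<longrightarrow>
          continuous_map K euclideanreal (E f) \<and>
          (\<forall>x\<in>F. E f x = f x) \<and>
          (\<forall>x\<in>topspace K. \<bar>E f x\<bar> \<le> (SUP y\<in>F. \<bar>f y\<bar>))) \<and>
     (\<forall>f g a b. continuous_map (subtopology K F) euclideanreal f \<longrightarrow>
          continuous_map (subtopology K F) euclideanreal g \<longrightarrow>
          (\<forall>x\<in>topspace K. E (\<lambda>y. a * f y + b * g y) x = a * E f x + b * E g x)) \<and>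
     (\<forall>x\<in>topspace K. E (\<lambda>_. 1) x = 1)"

definition regular_extension_property :: "'a topology \<Rightarrow> bool" where
  "regular_extension_property K \<longleftrightarrow>
     (\<forall>F. closedin K F \<and> F \<noteq> {} \<longrightarrow> (\<exists>E. regular_extension_operator K F E))"

end

theory Submission
  imports Defs
begin

text \<open>Let \<open>F \<noteq> {}\<close> be closed in the compactification \<open>K\<close> of \<open>\<Squnion>\<^sub>i K\<^sub>i\<close> and fix \<open>p \<in> F\<close>,
  with \<open>p = \<infinity>\<close> if \<open>\<infinity> \<in> F\<close>. Extend \<open>f \<in> C(F)\<close> summand by summand with the regular
  extension operators for the traces \<open>F \<inter> K\<^sub>i\<close>, and by the constant \<open>f(p)\<close> on the summands
  missed by \<open>F\<close> and at \<open>\<infinity>\<close>. Linearity, the norm bound and the unit are inherited pointwise.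
  For continuity at \<open>\<infinity>\<close>: on all but finitely many traces \<open>f\<close> stays within \<open>\<epsilon>\<close> of
  \<open>f(p)\<close> (these traces lie near \<open>\<infinity>\<close> if \<open>\<infinity> \<in> F\<close>, and are empty otherwise, \<open>F\<close> being
  compact), and a regular operator maps a function within \<open>\<epsilon>\<close> of a constant \<open>c\<close> to one
  within \<open>\<epsilon>\<close> of \<open>c\<close>, because it fixes constants.

  The argument is carried out in the library's \<open>Alexandroff_compactification\<close>, which always
  adds a point; the compactification of the statement is a closed subspace of it, and the regular
  extension property passes to closed subspaces.\<close>

lemma openin_Alexandroff_compactification_iff:
  "openin (Alexandroff_compactification X) U \<longleftrightarrow>
    U \<subseteq> insert None (Some ` topspace X) \<and> openin X (Some -` U) \<and>
    (None \<in> U \<longrightarrow> compactin X (topspace X - Some -` U))"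
proof
  assume "openin (Alexandroff_compactification X) U"
  then consider V where "openin X V" "U = Some ` V"
    | C where "compactin X C" "closedin X C" "U = insert None (Some ` (topspace X - C))"
    by (auto simp: openin_Alexandroff_compactification)
  then show "U \<subseteq> insert None (Some ` topspace X) \<and> openin X (Some -` U) \<and>
      (None \<in> U \<longrightarrow> compactin X (topspace X - Some -` U))"
  proof cases
    case 1
    then show ?thesis
      using openin_subset by (auto simp: inj_vimage_image_eq)
  next
    case 2
    have "Some -` U = topspace X - C"
      using 2 by auto
    moreover have "topspace X - (topspace X - C) = C"
      using 2 closedin_subset by blast
    moreover have "U \<subseteq> insert None (Some ` topspace X)"
      using 2 by blast
    ultimately show ?thesis
      using 2 by (simp add: openin_diff)
  qed
next
  assume U: "U \<subseteq> insert None (Some ` topspace X) \<and> openin X (Some -` U) \<and>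
      (None \<in> U \<longrightarrow> compactin X (topspace X - Some -` U))"
  show "openin (Alexandroff_compactification X) U"
  proof (cases "None \<in> U")
    case True
    have "Some -` U \<subseteq> topspace X"
      using U openin_subset by blast
    then have "U = insert None (Some ` (topspace X - (topspace X - Some -` U)))"
      using True by (auto simp: double_diff)
    moreover have "closedin X (topspace X - Some -` U)"
      using U by blast
    ultimately show ?thesis
      using True U unfolding openin_Alexandroff_compactification by blast
  next
    case False
    then have "U = Some ` (Some -` U)"
      using U by auto
    then show ?thesis
      using U openin_Alexandroff_compactification_image_Some by metis
  qed
qed

lemma one_point_compactification_eq_Alexandroff_compactification:
  "one_point_compactification X = Alexandroff_compactification X"
proof -
  have "(\<lambda>U. U \<subseteq> insert None (Some ` topspace X) \<and> openin X (Some -` U) \<and>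
          (None \<in> U \<longrightarrow> compactin X (topspace X - Some -` U))) =
        openin (Alexandroff_compactification X)"
    by (simp add: fun_eq_iff openin_Alexandroff_compactification_iff)
  then show ?thesis
    unfolding one_point_compactification_def by (simp add: openin_inverse)
qed

lemma copy_topology_eq_subtopology_Alexandroff_compactification:
  "copy_topology X = subtopology (Alexandroff_compactification X) (Some ` topspace X)"
proof -
  have "(\<lambda>U. U \<subseteq> Some ` topspace X \<and> openin X (Some -` U)) =
        openin (subtopology (Alexandroff_compactification X) (Some ` topspace X))"
  proof (intro ext iffI)
    fix U
    assume U: "U \<subseteq> Some ` topspace X \<and> openin X (Some -` U)"
    then have "U = Some ` (Some -` U)"
      by auto
    then have "openin (Alexandroff_compactification X) U"
      using U openin_Alexandroff_compactification_image_Some by metis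
    then show "openin (subtopology (Alexandroff_compactification X) (Some ` topspace X)) U"
      using U unfolding openin_subtopology by blast
  next
    fix U
    assume "openin (subtopology (Alexandroff_compactification X) (Some ` topspace X)) U"
    then obtain V where V: "openin (Alexandroff_compactification X) V" "U = V \<inter> Some ` topspace X"
      by (auto simp: openin_subtopology)
    have "Some -` U = {x \<in> topspace X. Some x \<in> V}"
      using V by auto
    then show "U \<subseteq> Some ` topspace X \<and> openin X (Some -` U)"
      using V openin_continuous_map_preimage[OF continuous_map_Some] by auto
  qed
  then show ?thesis
    unfolding copy_topology_def by (simp add: openin_inverse)
qed

lemma alexandroff_compactification_closedin_subtopology:
  obtains T where "closedin (Alexandroff_compactification X) T"
    "alexandroff_compactification X = subtopology (Alexandroff_compactification X) T"
proof (cases "compact_space X")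
  case True
  then have "closedin (Alexandroff_compactification X) (Some ` topspace X)"
    by (simp add: compact_space_def)
  with True show ?thesis
    by (intro that) (simp_all add: alexandroff_compactification_def
        copy_topology_eq_subtopology_Alexandroff_compactification)
next
  case False
  then have "alexandroff_compactification X =
      subtopology (Alexandroff_compactification X) (topspace (Alexandroff_compactification X))"
    by (simp add: alexandroff_compactification_def
        one_point_compactification_eq_Alexandroff_compactification del: topspace_Alexandroff_compactification)
  then show ?thesis
    using that closedin_topspace by blast
qed

lemma continuous_map_Alexandroff_compactification_realI:
  assumes cont: "continuous_map X euclideanreal (g \<circ> Some)"
    and near_None: "\<And>e. e > 0 \<Longrightarrow>
        \<exists>C. compactin X C \<and> (\<forall>x\<in>topspace X - C. \<bar>g (Some x) - g None\<bar> < e)"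
  shows "continuous_map (Alexandroff_compactification X) euclideanreal g"
  unfolding continuous_map_def
proof (intro conjI allI impI)
  fix U :: "real set"
  assume U: "openin euclideanreal U"
  define W where "W = {x \<in> topspace X. g (Some x) \<in> U}"
  have W: "openin X W"
    unfolding W_def using openin_continuous_map_preimage[OF cont U] by simp
  show "openin (Alexandroff_compactification X)
          {z \<in> topspace (Alexandroff_compactification X). g z \<in> U}"
  proof (cases "g None \<in> U")
    case True
    then obtain e where "e > 0" and ball: "ball (g None) e \<subseteq> U"
      using U by (auto simp: open_contains_ball)
    then obtain C where C: "compactin X C"
      and close: "\<And>x. x \<in> topspace X - C \<Longrightarrow> \<bar>g (Some x) - g None\<bar> < e"
      using near_None by blast
    have "topspace X - W \<subseteq> C"
    proof
      fix x
      assume x: "x \<in> topspace X - W"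
      show "x \<in> C"
      proof (rule ccontr)
        assume "x \<notin> C"
        then have "g (Some x) \<in> ball (g None) e"
          using close x by (simp add: dist_real_def abs_minus_commute)
        then show False
          using ball x by (auto simp: W_def)
      qed
    qed
    moreover have "closedin X (topspace X - W)"
      using W by (simp add: closedin_diff)
    ultimately have "compactin X (topspace X - W)"
      using C closed_compactin by blast
    moreover have "{z \<in> topspace (Alexandroff_compactification X). g z \<in> U} =
        insert None (Some ` (topspace X - (topspace X - W)))"
      using True by (auto simp: W_def)
    ultimately show ?thesis
      using \<open>closedin X (topspace X - W)\<close> unfolding openin_Alexandroff_compactification by blast
  next
    case False
    then have "{z \<in> topspace (Alexandroff_compactification X). g z \<in> U} = Some ` W"
      by (auto simp: W_def)
    then show ?thesis
      using W by simp
  qed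
qed simp

lemma continuous_map_subtopology_Alexandroff_compactification_near_None:
  assumes "continuous_map (subtopology (Alexandroff_compactification X) F) euclideanreal f"
    and "None \<in> F" and "e > 0"
  obtains C where "compactin X C"
    and "\<And>x. x \<in> topspace X - C \<Longrightarrow> Some x \<in> F \<Longrightarrow> \<bar>f (Some x) - f None\<bar> < e"
proof -
  let ?N = "{z \<in> topspace (subtopology (Alexandroff_compactification X) F). f z \<in> ball (f None) e}"
  have "openin (subtopology (Alexandroff_compactification X) F) ?N"
    using assms(1) by (rule openin_continuous_map_preimage) simp
  then obtain V where V: "openin (Alexandroff_compactification X) V" and N_eq: "?N = V \<inter> F"
    by (auto simp: openin_subtopology)
  have "None \<in> ?N"
    using assms(2,3) by simp
  then have "None \<in> V"
    using N_eq by blast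
  then obtain C where C: "compactin X C" "V = insert None (Some ` (topspace X - C))"
    using V unfolding openin_Alexandroff_compactification by blast
  show ?thesis
  proof (rule that[OF C(1)])
    fix x
    assume "x \<in> topspace X - C" and "Some x \<in> F"
    then have "Some x \<in> ?N"
      using C(2) N_eq by blast
    then show "\<bar>f (Some x) - f None\<bar> < e"
      by (simp add: dist_real_def abs_minus_commute)
  qed
qed

lemma closedin_Alexandroff_compactification_without_None:
  assumes "closedin (Alexandroff_compactification X) F" and "None \<notin> F"
  obtains C where "compactin X C" and "F = Some ` C"
  using assms by (auto simp: closedin_Alexandroff_compactification)

lemma continuous_map_sum_topologyI:
  assumes "\<And>i. i \<in> I \<Longrightarrow> continuous_map (X i) Y (\<lambda>x. g (i, x))"
  shows "continuous_map (sum_topology X I) Y g"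
  unfolding continuous_map_def
proof (intro conjI allI impI)
  show "g \<in> topspace (sum_topology X I) \<rightarrow> topspace Y"
    using assms by (force simp: continuous_map_def Pi_iff)
  fix U
  assume U: "openin Y U"
  have "{x. (i, x) \<in> {z \<in> topspace (sum_topology X I). g z \<in> U}} =
      {x \<in> topspace (X i). g (i, x) \<in> U}" if "i \<in> I" for i
    using that by auto
  then show "openin (sum_topology X I) {z \<in> topspace (sum_topology X I). g z \<in> U}"
    using openin_continuous_map_preimage[OF assms U] by (simp add: openin_sum_topology)
qed

lemma compactin_sum_topology_Sigma:
  assumes "finite J" and "J \<subseteq> I" and "\<And>i. i \<in> J \<Longrightarrow> compact_space (X i)"
  shows "compactin (sum_topology X I) (SIGMA j:J. topspace (X j))"
proof -
  have "compactin (sum_topology X I) ((\<lambda>x. (j, x)) ` topspace (X j))" if "j \<in> J" for j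
    using that assms(2,3) continuous_map_component_injection
    by (metis compact_space_def image_compactin subsetD)
  moreover have "(SIGMA j:J. topspace (X j)) = (\<Union>j\<in>J. (\<lambda>x. (j, x)) ` topspace (X j))"
    by auto
  ultimately show ?thesis
    using assms(1) by (auto intro: compactin_Union)
qed

lemma compactin_sum_topology_subset_Sigma:
  assumes "compactin (sum_topology X I) C"
  obtains J where "finite J" and "J \<subseteq> I" and "C \<subseteq> (SIGMA j:J. topspace (X j))"
proof -
  let ?\<U> = "(\<lambda>i. {i} \<times> topspace (X i)) ` I"
  have "openin (sum_topology X I) ({i} \<times> topspace (X i))" if "i \<in> I" for i
    unfolding openin_sum_topology
  proof (intro conjI ballI)
    fix j
    assume "j \<in> I"
    show "openin (X j) {x. (j, x) \<in> {i} \<times> topspace (X i)}"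
      by (cases "j = i") auto
  qed (use that in auto)
  moreover have "C \<subseteq> \<Union>?\<U>"
    using compactin_subset_topspace[OF assms] by auto
  ultimately obtain \<V> where "finite \<V>" "\<V> \<subseteq> ?\<U>" "C \<subseteq> \<Union>\<V>"
    using assms unfolding compactin_def by (metis (no_types, lifting) imageE)
  then obtain J where "J \<subseteq> I" "finite J" "\<V> = (\<lambda>i. {i} \<times> topspace (X i)) ` J"
    by (meson finite_subset_image)
  then show ?thesis
    using that \<open>C \<subseteq> \<Union>\<V>\<close> by auto
qed

lemma bdd_above_abs_continuous_map_closedin:
  assumes "compact_space K" and "closedin K F"
    and "continuous_map (subtopology K F) euclideanreal f"
  shows "bdd_above ((\<lambda>y. \<bar>f y\<bar>) ` F)"
proof -
  have "compact_space (subtopology K F)"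
    using assms(1,2) closedin_compact_space compact_space_subtopology by blast
  then have "compact (f ` F)"
    using image_compactin[OF _ assms(3)] closedin_subset[OF assms(2)]
    by (simp add: compact_space_def Int_absorb1)
  then obtain B where "\<forall>z\<in>f ` F. \<bar>z\<bar> \<le> B"
    using compact_imp_bounded bounded_real by blast
  then show ?thesis
    by (auto intro: bdd_aboveI2)
qed

lemma regular_extension_operatorD:
  assumes "regular_extension_operator K F E"
    and "continuous_map (subtopology K F) euclideanreal f"
  shows "continuous_map K euclideanreal (E f)"
    and "x \<in> F \<Longrightarrow> E f x = f x"
    and "x \<in> topspace K \<Longrightarrow> \<bar>E f x\<bar> \<le> (SUP y\<in>F. \<bar>f y\<bar>)"
  using assms unfolding regular_extension_operator_def by blast+

lemma regular_extension_operator_linear: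
  assumes "regular_extension_operator K F E"
    and "continuous_map (subtopology K F) euclideanreal f"
    and "continuous_map (subtopology K F) euclideanreal g"
    and "x \<in> topspace K"
  shows "E (\<lambda>y. a * f y + b * g y) x = a * E f x + b * E g x"
  using assms unfolding regular_extension_operator_def by blast

lemma regular_extension_operator_const_one:
  "regular_extension_operator K F E \<Longrightarrow> x \<in> topspace K \<Longrightarrow> E (\<lambda>_. 1) x = 1"
  unfolding regular_extension_operator_def by blast

lemma regular_extension_operator_dist_le:
  assumes E: "regular_extension_operator K F E" and "F \<noteq> {}"
    and f: "continuous_map (subtopology K F) euclideanreal f"
    and le: "\<And>y. y \<in> F \<Longrightarrow> \<bar>f y - c\<bar> \<le> e"
    and x: "x \<in> topspace K"
  shows "\<bar>E f x - c\<bar> \<le> e"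
proof -
  have one: "continuous_map (subtopology K F) euclideanreal (\<lambda>_. 1)"
    by simp
  have "E f x - c = E (\<lambda>y. 1 * f y + (- c) * 1) x"
    using regular_extension_operator_linear[OF E f one x, of 1 "- c"]
      regular_extension_operator_const_one[OF E x] by simp
  also have "\<bar>\<dots>\<bar> \<le> (SUP y\<in>F. \<bar>1 * f y + (- c) * 1\<bar>)"
    using f by (intro regular_extension_operatorD(3)[OF E _ x] continuous_intros)
  also have "\<dots> \<le> e"
    using \<open>F \<noteq> {}\<close> le by (intro cSUP_least) auto
  finally show ?thesis .
qed

lemma regular_extension_operator_subtopology:
  assumes "regular_extension_operator K F E" and "F \<subseteq> T"
  shows "regular_extension_operator (subtopology K T) F E"
proof -
  have "subtopology (subtopology K T) F = subtopology K F"
    using assms(2) by (simp add: subtopology_subtopology Int_absorb1)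
  then show ?thesis
    using assms(1) unfolding regular_extension_operator_def
    by (simp add: continuous_map_from_subtopology)
qed

lemma regular_extension_property_closedin_subtopology:
  assumes "regular_extension_property K" and "closedin K T"
  shows "regular_extension_property (subtopology K T)"
  unfolding regular_extension_property_def
proof (intro allI impI)
  fix F
  assume F: "closedin (subtopology K T) F \<and> F \<noteq> {}"
  then have "closedin K F"
    using assms(2) closedin_trans_full by blast
  then obtain E where "regular_extension_operator K F E"
    using F assms(1) unfolding regular_extension_property_def by blast
  moreover have "F \<subseteq> T"
    using F closedin_subset by fastforce
  ultimately show "\<exists>E. regular_extension_operator (subtopology K T) F E"
    using regular_extension_operator_subtopology by blast
qed

definition summand_slice :: "('i \<times> 'a) option set \<Rightarrow> 'i \<Rightarrow> 'a set" where
  "summand_slice F i = {x. Some (i, x) \<in> F}"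

lemma continuous_map_Some_component_injection:
  "i \<in> I \<Longrightarrow>
    continuous_map (X i) (Alexandroff_compactification (sum_topology X I)) (\<lambda>x. Some (i, x))"
  using continuous_map_compose[OF continuous_map_component_injection continuous_map_Some]
  by (simp add: o_def)

lemma closedin_summand_slice:
  assumes F: "closedin (Alexandroff_compactification (sum_topology X I)) F" and i: "i \<in> I"
  shows "closedin (X i) (summand_slice F i)"
proof -
  have "summand_slice F i = {x \<in> topspace (X i). Some (i, x) \<in> F}"
    using closedin_subset[OF F] by (auto simp: summand_slice_def)
  then show ?thesis
    using closedin_continuous_map_preimage[OF continuous_map_Some_component_injection[OF i] F]
    by simp
qed

locale Alexandroff_sum_gluing =
  fixes X :: "'i \<Rightarrow> 'a topology" and I :: "'i set"
    and F :: "('i \<times> 'a) option set" and p :: "('i \<times> 'a) option"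
    and ext :: "'i \<Rightarrow> ('a \<Rightarrow> real) \<Rightarrow> 'a \<Rightarrow> real"
  assumes compact_summand: "\<And>i. i \<in> I \<Longrightarrow> compact_space (X i)"
    and closedin_F: "closedin (Alexandroff_compactification (sum_topology X I)) F"
    and p_in_F: "p \<in> F"
    and p_None: "None \<in> F \<Longrightarrow> p = None"
    and regular_ext: "\<And>i. i \<in> I \<Longrightarrow> summand_slice F i \<noteq> {} \<Longrightarrow>
        regular_extension_operator (X i) (summand_slice F i) (ext i)"
begin

abbreviation K where "K \<equiv> Alexandroff_compactification (sum_topology X I)"

definition glue :: "(('i \<times> 'a) option \<Rightarrow> real) \<Rightarrow> ('i \<times> 'a) option \<Rightarrow> real" where
  "glue f z = (case z of
      None \<Rightarrow> f p
    | Some (i, x) \<Rightarrow> if summand_slice F i = {} then f p else ext i (\<lambda>y. f (Some (i, y))) x)"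

lemma continuous_map_slice:
  assumes f: "continuous_map (subtopology K F) euclideanreal f" and i: "i \<in> I"
  shows "continuous_map (subtopology (X i) (summand_slice F i)) euclideanreal (\<lambda>y. f (Some (i, y)))"
proof -
  have "continuous_map (subtopology (X i) (summand_slice F i)) (subtopology K F) (\<lambda>y. Some (i, y))"
    using continuous_map_Some_component_injection[OF i]
    by (intro continuous_map_into_subtopology continuous_map_from_subtopology)
      (auto simp: summand_slice_def)
  then show ?thesis
    using continuous_map_compose[OF _ f] by (simp add: o_def)
qed

lemma close_to_base_point_off_finite_subset:
  assumes f: "continuous_map (subtopology K F) euclideanreal f" and "e > 0"
  obtains J where "finite J" and "J \<subseteq> I"
    and "\<And>i x. i \<in> I - J \<Longrightarrow> x \<in> summand_slice F i \<Longrightarrow> \<bar>f (Some (i, x)) - f p\<bar> < e"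
proof (cases "None \<in> F")
  case True
  then obtain C where C: "compactin (sum_topology X I) C"
    and close: "\<And>z. z \<in> topspace (sum_topology X I) - C \<Longrightarrow> Some z \<in> F \<Longrightarrow>
                  \<bar>f (Some z) - f None\<bar> < e"
    using continuous_map_subtopology_Alexandroff_compactification_near_None[OF f True \<open>e > 0\<close>]
    by blast
  obtain J where J: "finite J" "J \<subseteq> I" "C \<subseteq> (SIGMA j:J. topspace (X j))"
    using compactin_sum_topology_subset_Sigma[OF C] .
  show ?thesis
  proof (rule that[OF J(1,2)])
    fix i x
    assume i: "i \<in> I - J" and x: "x \<in> summand_slice F i"
    then have "(i, x) \<in> topspace (sum_topology X I) - C"
      using J(3) closedin_subset[OF closedin_F] by (auto simp: summand_slice_def)
    then show "\<bar>f (Some (i, x)) - f p\<bar> < e"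
      using close x p_None True by (auto simp: summand_slice_def)
  qed
next
  case False
  then obtain C where C: "compactin (sum_topology X I) C" "F = Some ` C"
    using closedin_Alexandroff_compactification_without_None closedin_F by blast
  obtain J where J: "finite J" "J \<subseteq> I" "C \<subseteq> (SIGMA j:J. topspace (X j))"
    using compactin_sum_topology_subset_Sigma[OF C(1)] .
  show ?thesis
  proof (rule that[OF J(1,2)])
    fix i x
    assume "i \<in> I - J" and "x \<in> summand_slice F i"
    then show "\<bar>f (Some (i, x)) - f p\<bar> < e"
      using J(3) C(2) by (auto simp: summand_slice_def)
  qed
qed

lemma glue_close_to_None_off_finite_subset:
  assumes f: "continuous_map (subtopology K F) euclideanreal f" and "e > 0"
  obtains J where "finite J" and "J \<subseteq> I"
    and "\<And>z. z \<in> topspace (sum_topology X I) - (SIGMA j:J. topspace (X j)) \<Longrightarrow>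
           \<bar>glue f (Some z) - glue f None\<bar> < e"
proof -
  obtain J where J: "finite J" "J \<subseteq> I"
    and close: "\<And>i x. i \<in> I - J \<Longrightarrow> x \<in> summand_slice F i \<Longrightarrow> \<bar>f (Some (i, x)) - f p\<bar> < e / 2"
    using close_to_base_point_off_finite_subset[OF f, of "e / 2"] \<open>e > 0\<close> by auto
  have "\<bar>glue f (Some (i, x)) - glue f None\<bar> < e" if i: "i \<in> I - J" and x: "x \<in> topspace (X i)" for i x
  proof (cases "summand_slice F i = {}")
    case False
    have "\<bar>ext i (\<lambda>y. f (Some (i, y))) x - f p\<bar> \<le> e / 2"
      using i x close False
      by (intro regular_extension_operator_dist_le[OF regular_ext False continuous_map_slice[OF f]])
        (auto intro: less_imp_le)
    then show ?thesis
      using False \<open>e > 0\<close> by (simp add: glue_def)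
  next
    case True
    then show ?thesis
      using \<open>e > 0\<close> by (simp add: glue_def)
  qed
  then show ?thesis
    using that[OF J] by fastforce
qed

lemma continuous_map_glue:
  assumes f: "continuous_map (subtopology K F) euclideanreal f"
  shows "continuous_map K euclideanreal (glue f)"
proof (rule continuous_map_Alexandroff_compactification_realI)
  show "continuous_map (sum_topology X I) euclideanreal (glue f \<circ> Some)"
  proof (rule continuous_map_sum_topologyI)
    fix i
    assume i: "i \<in> I"
    show "continuous_map (X i) euclideanreal (\<lambda>x. (glue f \<circ> Some) (i, x))"
    proof (cases "summand_slice F i = {}")
      case False
      then show ?thesis
        using regular_extension_operatorD(1)[OF regular_ext[OF i False] continuous_map_slice[OF f i]]
        by (simp add: glue_def)
    qed (simp add: glue_def)
  qed
next
  fix e :: real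
  assume "e > 0"
  then obtain J where J: "finite J" "J \<subseteq> I"
    and "\<And>z. z \<in> topspace (sum_topology X I) - (SIGMA j:J. topspace (X j)) \<Longrightarrow>
           \<bar>glue f (Some z) - glue f None\<bar> < e"
    using glue_close_to_None_off_finite_subset[OF f] by blast
  moreover have "compactin (sum_topology X I) (SIGMA j:J. topspace (X j))"
    using J compact_summand by (intro compactin_sum_topology_Sigma) auto
  ultimately show "\<exists>C. compactin (sum_topology X I) C \<and>
      (\<forall>z\<in>topspace (sum_topology X I) - C. \<bar>glue f (Some z) - glue f None\<bar> < e)"
    by blast
qed

lemma glue_eq:
  assumes f: "continuous_map (subtopology K F) euclideanreal f" and z: "z \<in> F"
  shows "glue f z = f z"
proof (cases z)
  case None
  have "glue f None = f p"
    by (simp add: glue_def)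
  then show ?thesis
    using None p_None z by simp
next
  case (Some w)
  then obtain i x where w: "z = Some (i, x)"
    by (cases w) auto
  then have i: "i \<in> I" and x: "x \<in> summand_slice F i"
    using z closedin_subset[OF closedin_F] by (auto simp: summand_slice_def)
  then have "summand_slice F i \<noteq> {}"
    by auto
  then show ?thesis
    using regular_extension_operatorD(2)[OF regular_ext[OF i] continuous_map_slice[OF f i] x] w
    by (simp add: glue_def)
qed

lemma abs_glue_le:
  assumes f: "continuous_map (subtopology K F) euclideanreal f" and z: "z \<in> topspace K"
  shows "\<bar>glue f z\<bar> \<le> (SUP y\<in>F. \<bar>f y\<bar>)"
proof -
  have bdd: "bdd_above ((\<lambda>y. \<bar>f y\<bar>) ` F)"
    using compact_space_Alexandroff_compactification closedin_F f
    by (rule bdd_above_abs_continuous_map_closedin)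
  have fp: "\<bar>f p\<bar> \<le> (SUP y\<in>F. \<bar>f y\<bar>)"
    using p_in_F bdd by (rule cSUP_upper)
  show ?thesis
  proof (cases z)
    case None
    then show ?thesis
      using fp by (simp add: glue_def)
  next
    case (Some w)
    then obtain i x where w: "z = Some (i, x)"
      by (cases w) auto
    then have i: "i \<in> I" and x: "x \<in> topspace (X i)"
      using z by auto
    show ?thesis
    proof (cases "summand_slice F i = {}")
      case False
      have "\<bar>ext i (\<lambda>y. f (Some (i, y))) x\<bar> \<le> (SUP y\<in>summand_slice F i. \<bar>f (Some (i, y))\<bar>)"
        using regular_extension_operatorD(3)[OF regular_ext[OF i False] continuous_map_slice[OF f i]] x
        by simp
      also have "\<dots> \<le> (SUP y\<in>F. \<bar>f y\<bar>)"
        using False by (intro cSUP_least cSUP_upper[OF _ bdd]) (auto simp: summand_slice_def)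
      finally show ?thesis
        using False w by (simp add: glue_def)
    qed (use fp w in \<open>simp add: glue_def\<close>)
  qed
qed

lemma glue_linear:
  assumes f: "continuous_map (subtopology K F) euclideanreal f"
    and g: "continuous_map (subtopology K F) euclideanreal g"
    and z: "z \<in> topspace K"
  shows "glue (\<lambda>y. a * f y + b * g y) z = a * glue f z + b * glue g z"
proof (cases z)
  case (Some w)
  then obtain i x where w: "z = Some (i, x)"
    by (cases w) auto
  then have i: "i \<in> I" and x: "x \<in> topspace (X i)"
    using z by auto
  show ?thesis
  proof (cases "summand_slice F i = {}")
    case False
    then show ?thesis
      using regular_extension_operator_linear[OF regular_ext[OF i False]
          continuous_map_slice[OF f i] continuous_map_slice[OF g i] x] w
      by (simp add: glue_def)
  qed (simp add: glue_def w)
qed (simp add: glue_def)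

lemma glue_const_one:
  assumes z: "z \<in> topspace K"
  shows "glue (\<lambda>_. 1) z = 1"
proof (cases z)
  case (Some w)
  then obtain i x where w: "z = Some (i, x)"
    by (cases w) auto
  then have i: "i \<in> I" and x: "x \<in> topspace (X i)"
    using z by auto
  show ?thesis
  proof (cases "summand_slice F i = {}")
    case False
    then show ?thesis
      using regular_extension_operator_const_one[OF regular_ext[OF i False] x] w
      by (simp add: glue_def)
  qed (simp add: glue_def w)
qed (simp add: glue_def)

lemma regular_extension_operator_glue: "regular_extension_operator K F glue"
  unfolding regular_extension_operator_def
  by (intro conjI allI impI ballI)
    (simp_all add: continuous_map_glue glue_eq abs_glue_le glue_linear glue_const_one)

end

theorem regular_extension_property_Alexandroff_compactification_sum_topology:
  assumes compact: "\<And>i. i \<in> I \<Longrightarrow> compact_space (X i)"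
    and REP: "\<And>i. i \<in> I \<Longrightarrow> regular_extension_property (X i)"
  shows "regular_extension_property (Alexandroff_compactification (sum_topology X I))"
  unfolding regular_extension_property_def
proof (intro allI impI)
  fix F
  assume F: "closedin (Alexandroff_compactification (sum_topology X I)) F \<and> F \<noteq> {}"
  have "\<exists>E. i \<in> I \<and> summand_slice F i \<noteq> {} \<longrightarrow>
      regular_extension_operator (X i) (summand_slice F i) E" for i
  proof (cases "i \<in> I \<and> summand_slice F i \<noteq> {}")
    case True
    then have "closedin (X i) (summand_slice F i)"
      using F closedin_summand_slice[of X I F i] by simp
    then show ?thesis
      using REP True unfolding regular_extension_property_def by blast
  qed auto
  then obtain ext where ext: "\<And>i. i \<in> I \<Longrightarrow> summand_slice F i \<noteq> {} \<Longrightarrow>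
      regular_extension_operator (X i) (summand_slice F i) (ext i)"
    by metis
  obtain p where p: "p \<in> F" "None \<in> F \<Longrightarrow> p = None"
  proof (cases "None \<in> F")
    case True
    then show ?thesis
      by (intro that[of None]) auto
  next
    case False
    obtain q where "q \<in> F"
      using F by blast
    then show ?thesis
      using False by (intro that[of q]) auto
  qed
  interpret Alexandroff_sum_gluing X I F p ext
    by unfold_locales (use compact F p ext in auto)
  show "\<exists>E. regular_extension_operator (Alexandroff_compactification (sum_topology X I)) F E"
    using regular_extension_operator_glue by blast
qed

theorem proposition3p12:
  fixes X :: "'i \<Rightarrow> 'a topology" and I :: "'i set"
  assumes "\<And>i. i \<in> I \<Longrightarrow> compact_space (X i)"
    and "\<And>i. i \<in> I \<Longrightarrow> Hausdorff_space (X i)"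
    and "\<And>i. i \<in> I \<Longrightarrow> topspace (X i) \<noteq> {}"
    and "\<And>i. i \<in> I \<Longrightarrow> regular_extension_property (X i)"
  shows "regular_extension_property (alexandroff_compactification (sum_topology X I))"
proof -
  obtain T where "closedin (Alexandroff_compactification (sum_topology X I)) T"
    and "alexandroff_compactification (sum_topology X I) =
           subtopology (Alexandroff_compactification (sum_topology X I)) T"
    by (rule alexandroff_compactification_closedin_subtopology)
  then show ?thesis
    using regular_extension_property_closedin_subtopology
      regular_extension_property_Alexandroff_compactification_sum_topology assms(1,4)
    by metis
qed

end
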